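(* Let $\mathcal{G}=(V,E)$ be a connected undirected graph with node set $V=\{1,\dots,n\}$, and for each node $i$ let $N^i$ denote its set of neighbors. Consider the time-varying function $F(\mathbf{y};t)=f(\mathbf{y};t)+g(\mathbf{y};t)$ of $\mathbf{y}=(\mathbf{y}^1;\dots;\mathbf{y}^n)\in\mathbb{R}^{np}$, $\mathbf{y}^i\in\mathbb{R}^p$, where $f(\mathbf{y};t)=\sum_{i\in V}f^i(\mathbf{y}^i;t)$ and $g(\mathbf{y};t)=\sum_{i\in V}g^{i,i}(\mathbf{y}^i;t)+\sum_{(i,j)\in E}g^{i,j}(\mathbf{y}^i,\mathbf{y}^j;t)$, all functions being twice continuously differentiable in $\mathbf{y}$ and such that $\nabla_{t\mathbf{y}}F$ exists. Fix a point $(\mathbf{y}_k,t_k)$ and define $$\mathbf{D}_k:=\nabla_{\mathbf{y}\mathbf{y}}f(\mathbf{y}_k;t_k)+\mathrm{diag}[\nabla_{\mathbf{y}\mathbf{y}}g(\mathbf{y}_k;t_k)],\qquad \mathbf{B}_k:=\mathrm{diag}[\nabla_{\mathbf{y}\mathbf{y}}g(\mathbf{y}_k;t_k)]-\nabla_{\mathbf{y}\mathbf{y}}g(\mathbf{y}_k;t_k),$$ where $\mathrm{diag}[\cdot]$ keeps the $p\times p$ diagonal blocks and sets all other blocks to zero, and assume $\mathbf{D}_k$ is positive definite. For an integer $K\ge 0$ let $$\mathbf{H}_{k,(K)}^{-1}:=\mathbf{D}_k^{-1/2}\sum_{\tau=0}^{K}\big(\mathbf{D}_k^{-1/2}\mathbf{B}_k\mathbf{D}_k^{-1/2}\big)^{\tau}\mathbf{D}_k^{-1/2},\qquad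 \mathbf{p}_{k,(K)}:=-\mathbf{H}_{k,(K)}^{-1}\nabla_{t\mathbf{y}}F(\mathbf{y}_k;t_k).$$ Denote by $\mathbf{D}_k^{ij},\mathbf{B}_k^{ij}$ the $(i,j)$-th $p\times p$ blocks of $\mathbf{D}_k,\mathbf{B}_k$ and by $\nabla_{t\mathbf{y}}F^i(\mathbf{y}_k;t_k)$ the $i$-th $p$-dimensional subvector of $\nabla_{t\mathbf{y}}F(\mathbf{y}_k;t_k)$. Define, for each node $i$, $\mathbf{p}^i_{k,(0)}:=-(\mathbf{D}_k^{ii})^{-1}\nabla_{t\mathbf{y}}F^i(\mathbf{y}_k;t_k)$ and, for $\tau=0,\dots,K-1$, $$\mathbf{p}^i_{k,(\tau+1)}:=(\mathbf{D}_k^{ii})^{-1}\Big(\sum_{j\in N^i}\mathbf{B}_k^{ij}\mathbf{p}^j_{k,(\tau)}-\nabla_{t\mathbf{y}}F^i(\mathbf{y}_k;t_k)\Big).$$ Then for every $i$, $\mathbf{p}^i_{k,(K)}$ equals the $i$-th subvector of $\mathbf{p}_{k,(K)}$.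
   Context: $\nabla_{\mathbf{y}\mathbf{y}}$ denotes the Hessian with respect to $\mathbf{y}$ and $\nabla_{t\mathbf{y}}F$ the partial derivative with respect to $t$ of the gradient $\nabla_{\mathbf{y}}F$. The matrix $\mathbf{D}_k$ is block diagonal, and the block $\mathbf{B}_k^{ij}$ for $i\ne j$ equals $-\nabla_{\mathbf{y}^i\mathbf{y}^j}g^{i,j}(\mathbf{y}_k^i,\mathbf{y}_k^j;t_k)$ if $(i,j)$ is an edge and zero otherwise; diagonal blocks of $\mathbf{B}_k$ are zero. *)

theory Defs
  imports "HOL-Analysis.Analysis"
begin

text \<open>Vectors in R^(np) are indexed by pairs (node, coordinate): type real^('n \<times> 'p).
  Node i's subvector y^i is blk y i; the (i,j)-th p-by-p block of a matrix is mblk M i j.\<close>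

definition blk :: "real^('n::finite \<times> 'p::finite) \<Rightarrow> 'n \<Rightarrow> real^'p" where
  "blk y i = (\<chi> a. y $ (i, a))"

definition mblk :: "real^('n::finite \<times> 'p::finite)^('n \<times> 'p) \<Rightarrow> 'n \<Rightarrow> 'n \<Rightarrow> real^'p^'p" where
  "mblk M i j = (\<chi> a b. M $ (i, a) $ (j, b))"

definition bdiag :: "real^('n::finite \<times> 'p::finite)^('n \<times> 'p) \<Rightarrow> real^('n \<times> 'p)^('n \<times> 'p)" where
  "bdiag M = (\<chi> c d. if fst c = fst d then M $ c $ d else 0)"

definition pdiff :: "(real^'m::finite \<Rightarrow> real) \<Rightarrow> real^'m \<Rightarrow> 'm \<Rightarrow> real" where
  "pdiff h z c = deriv (\<lambda>s. h (z + s *\<^sub>R axis c 1)) 0"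

definition has_pdiff :: "(real^'m::finite \<Rightarrow> real) \<Rightarrow> real^'m \<Rightarrow> 'm \<Rightarrow> bool" where
  "has_pdiff h z c \<longleftrightarrow> (\<lambda>s. h (z + s *\<^sub>R axis c 1)) differentiable (at 0)"

definition C2 :: "(real^'m::finite \<Rightarrow> real) \<Rightarrow> bool" where
  "C2 h \<longleftrightarrow>
     (\<forall>c. (\<forall>z. has_pdiff h z c) \<and> continuous_on UNIV (\<lambda>z. pdiff h z c)) \<and>
     (\<forall>c d. (\<forall>z. has_pdiff (\<lambda>w. pdiff h w c) z d) \<and>
            continuous_on UNIV (\<lambda>z. pdiff (\<lambda>w. pdiff h w c) z d))"

definition hess :: "(real^'m::finite \<Rightarrow> real) \<Rightarrow> real^'m \<Rightarrow> real^'m^'m" where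
  "hess h z = (\<chi> c d. pdiff (\<lambda>w. pdiff h w c) z d)"

definition grad_t :: "(real^'m::finite \<Rightarrow> real \<Rightarrow> real) \<Rightarrow> real^'m \<Rightarrow> real \<Rightarrow> real^'m" where
  "grad_t F y t = (\<chi> c. deriv (\<lambda>s. pdiff (\<lambda>z. F z s) y c) t)"

definition pos_def :: "real^'m::finite^'m \<Rightarrow> bool" where
  "pos_def M \<longleftrightarrow> transpose M = M \<and> (\<forall>x. x \<noteq> 0 \<longrightarrow> 0 < x \<bullet> (M *v x))"

primrec mpow :: "real^'m::finite^'m \<Rightarrow> nat \<Rightarrow> real^'m^'m" where
  "mpow M 0 = mat 1"
| "mpow M (Suc k) = M ** mpow M k"

text \<open>Distributed recursion p^i_{k,(tau)}, with N the neighbour map and v = nabla_{ty}F(y_k;t_k).\<close>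
primrec dist_dir :: "real^('n::finite \<times> 'p::finite)^('n \<times> 'p) \<Rightarrow> real^('n \<times> 'p)^('n \<times> 'p) \<Rightarrow>
    ('n \<Rightarrow> 'n set) \<Rightarrow> real^('n \<times> 'p) \<Rightarrow> nat \<Rightarrow> 'n \<Rightarrow> real^'p" where
  "dist_dir D B N v 0 i = - (matrix_inv (mblk D i i) *v blk v i)"
| "dist_dir D B N v (Suc k) i =
     matrix_inv (mblk D i i) *v ((\<Sum>j\<in>N i. mblk B i j *v dist_dir D B N v k j) - blk v i)"

definition fsum :: "('n::finite \<Rightarrow> real^'p \<Rightarrow> real \<Rightarrow> real) \<Rightarrow> real^('n \<times> 'p) \<Rightarrow> real \<Rightarrow> real" where
  "fsum f y t = (\<Sum>i\<in>UNIV. f i (blk y i) t)"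

definition gsum :: "('n::finite \<Rightarrow> real^'p \<Rightarrow> real \<Rightarrow> real) \<Rightarrow>
    ('n \<Rightarrow> 'n \<Rightarrow> real^'p \<Rightarrow> real^'p \<Rightarrow> real \<Rightarrow> real) \<Rightarrow> ('n \<times> 'n) set \<Rightarrow>
    real^('n \<times> 'p) \<Rightarrow> real \<Rightarrow> real" where
  "gsum gd ge E y t = (\<Sum>i\<in>UNIV. gd i (blk y i) t) + (\<Sum>(i, j)\<in>E. ge i j (blk y i) (blk y j) t)"

end

theory Submission
  imports Defs
begin

text \<open>Since each \<open>f\<^sup>i\<close> and \<open>g\<^sup>i\<^sup>,\<^sup>i\<close> depends on the block \<open>y\<^sup>i\<close> only and each \<open>g\<^sup>i\<^sup>,\<^sup>j\<close> on
  the blocks \<open>y\<^sup>i, y\<^sup>j\<close> only, \<open>D\<close> is block diagonal and the block \<open>B\<^sup>i\<^sup>j\<close> vanishes unless \<open>j\<close> is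
  a neighbour of \<open>i\<close>. Hence the node-wise recursion is, block by block, the Jacobi iteration
  \<open>p(\<tau>+1) = D\<^sup>-\<^sup>1 (B p(\<tau>) - v)\<close>, whose \<open>K\<close>-th iterate is the truncated Neumann series
  \<open>-(\<Sum>\<tau>\<le>K. (D\<^sup>-\<^sup>1 B)\<^sup>\<tau> D\<^sup>-\<^sup>1 v)\<close>. Finally, \<open>S (S B S)\<^sup>\<tau> S = (D\<^sup>-\<^sup>1 B)\<^sup>\<tau> D\<^sup>-\<^sup>1\<close> for any \<open>S\<close> with \<open>S S = D\<^sup>-\<^sup>1\<close>.\<close>

definition twice_pdifferentiable :: "(real^'m::finite \<Rightarrow> real) \<Rightarrow> bool" where
  "twice_pdifferentiable h \<longleftrightarrow>
     (\<forall>c z. has_pdiff h z c) \<and> (\<forall>c d z. has_pdiff (\<lambda>w. pdiff h w c) z d)"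

lemma C2_imp_twice_pdifferentiable: "C2 h \<Longrightarrow> twice_pdifferentiable h"
  unfolding C2_def twice_pdifferentiable_def by blast

lemma has_pdiff_DERIV:
  "has_pdiff h z c \<Longrightarrow> ((\<lambda>s. h (z + s *\<^sub>R axis c 1)) has_real_derivative pdiff h z c) (at 0)"
  unfolding has_pdiff_def pdiff_def using DERIV_deriv_iff_real_differentiable by blast

lemma pdiff_sum:
  assumes "finite A" "\<forall>k\<in>A. has_pdiff (h k) z c"
  shows "pdiff (\<lambda>z. \<Sum>k\<in>A. h k z) z c = (\<Sum>k\<in>A. pdiff (h k) z c)"
    and "has_pdiff (\<lambda>z. \<Sum>k\<in>A. h k z) z c"
proof -
  have "((\<lambda>s. \<Sum>k\<in>A. h k (z + s *\<^sub>R axis c 1)) has_real_derivative (\<Sum>k\<in>A. pdiff (h k) z c)) (at 0)"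
    by (rule DERIV_sum) (use has_pdiff_DERIV assms in auto)
  then show "pdiff (\<lambda>z. \<Sum>k\<in>A. h k z) z c = (\<Sum>k\<in>A. pdiff (h k) z c)"
    and "has_pdiff (\<lambda>z. \<Sum>k\<in>A. h k z) z c"
    unfolding pdiff_def has_pdiff_def by (auto intro: DERIV_imp_deriv simp: real_differentiable_def)
qed

lemma hess_sum:
  assumes "finite A" "\<forall>k\<in>A. twice_pdifferentiable (h k)"
  shows "hess (\<lambda>y. \<Sum>k\<in>A. h k y) z = (\<Sum>k\<in>A. hess (h k) z)"
    and "twice_pdifferentiable (\<lambda>y. \<Sum>k\<in>A. h k y)"
proof -
  have grad: "(\<lambda>w. pdiff (\<lambda>y. \<Sum>k\<in>A. h k y) w c) = (\<lambda>w. \<Sum>k\<in>A. pdiff (h k) w c)" for c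
    using pdiff_sum(1)[OF assms(1)] assms(2) unfolding twice_pdifferentiable_def by blast
  show "hess (\<lambda>y. \<Sum>k\<in>A. h k y) z = (\<Sum>k\<in>A. hess (h k) z)"
    using pdiff_sum(1)[OF assms(1), of "\<lambda>k w. pdiff (h k) w _" z] assms(2)
    unfolding hess_def grad twice_pdifferentiable_def by (simp add: vec_eq_iff sum_component)
  show "twice_pdifferentiable (\<lambda>y. \<Sum>k\<in>A. h k y)"
    unfolding twice_pdifferentiable_def grad
  proof (intro conjI allI)
    show "has_pdiff (\<lambda>y. \<Sum>k\<in>A. h k y) z c" for c z
      using pdiff_sum(2)[OF assms(1), of h z c] assms(2)
      unfolding twice_pdifferentiable_def by blast
    show "has_pdiff (\<lambda>w. \<Sum>k\<in>A. pdiff (h k) w c) z d" for c d z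
      using pdiff_sum(2)[OF assms(1), of "\<lambda>k w. pdiff (h k) w c" z d] assms(2)
      unfolding twice_pdifferentiable_def by blast
  qed
qed

lemma hess_add:
  assumes "twice_pdifferentiable h1" "twice_pdifferentiable h2"
  shows "hess (\<lambda>y. h1 y + h2 y) z = hess h1 z + hess h2 z"
proof -
  have "hess (\<lambda>y. \<Sum>b\<in>UNIV. (if b then h2 else h1) y) z = (\<Sum>b\<in>UNIV. hess (if b then h2 else h1) z)"
    using assms by (intro hess_sum(1)) auto
  then show ?thesis by (simp add: UNIV_bool)
qed

definition depends_only_on :: "'m set \<Rightarrow> (real^'m::finite \<Rightarrow> real) \<Rightarrow> bool" where
  "depends_only_on S h \<longleftrightarrow> (\<forall>z z'. (\<forall>a\<in>S. z $ a = z' $ a) \<longrightarrow> h z = h z')"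

lemma depends_only_on_pdiff:
  assumes "depends_only_on S h"
  shows "depends_only_on S (\<lambda>w. pdiff h w c)"
  unfolding depends_only_on_def pdiff_def
proof (intro allI impI)
  fix z z' :: "real^'a"
  assume "\<forall>a\<in>S. z $ a = z' $ a"
  then have "(\<lambda>s. h (z + s *\<^sub>R axis c 1)) = (\<lambda>s. h (z' + s *\<^sub>R axis c 1))"
    using assms unfolding depends_only_on_def by (intro ext) simp
  then show "deriv (\<lambda>s. h (z + s *\<^sub>R axis c 1)) 0 = deriv (\<lambda>s. h (z' + s *\<^sub>R axis c 1)) 0"
    by simp
qed

lemma pdiff_eq_0_if_independent:
  assumes "depends_only_on S h" "c \<notin> S"
  shows "pdiff h z c = 0"
proof -
  have "h (z + s *\<^sub>R axis c 1) = h z" for s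
    by (rule assms(1)[unfolded depends_only_on_def, rule_format])
       (use assms(2) in \<open>auto simp: axis_def\<close>)
  then show ?thesis unfolding pdiff_def by simp
qed

lemma hess_eq_0_if_independent:
  assumes h: "depends_only_on S h" and "c \<notin> S \<or> d \<notin> S"
  shows "hess h z $ c $ d = 0"
proof (cases "d \<in> S")
  case True
  then have "(\<lambda>w. pdiff h w c) = (\<lambda>w. 0)"
    using assms pdiff_eq_0_if_independent[OF h] by auto
  then have "hess h z $ c $ d = pdiff (\<lambda>w. 0) z d"
    unfolding hess_def by simp
  then show ?thesis unfolding pdiff_def by simp
next
  case False
  then show ?thesis unfolding hess_def
    using pdiff_eq_0_if_independent[OF depends_only_on_pdiff[OF h]] by simp
qed

lemma blk_nth [simp]: "blk x i $ a = x $ (i, a)"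
  by (simp add: blk_def)

lemma mblk_nth [simp]: "mblk M i j $ a $ b = M $ (i, a) $ (j, b)"
  by (simp add: mblk_def)

lemma blk_eqI: "(\<And>i. blk x i = blk y i) \<Longrightarrow> x = y"
  by (metis blk_nth prod.collapse vec_eq_iff)

lemma blk_diff: "blk (x - y) i = blk x i - blk y i"
  and blk_uminus: "blk (- x) i = - blk x i"
  and blk_zero: "blk 0 i = 0"
  by (simp_all add: vec_eq_iff)

lemma depends_only_on_blk: "depends_only_on {a. fst a = i} (\<lambda>y. F (blk y i))"
  unfolding depends_only_on_def by (auto intro!: arg_cong[where f = F] simp: vec_eq_iff)

lemma depends_only_on_blk2:
  "depends_only_on {a. fst a = i \<or> fst a = j} (\<lambda>y. F (blk y i) (blk y j))"
  unfolding depends_only_on_def by (auto intro!: arg_cong2[where f = F] simp: vec_eq_iff)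

lemma blk_matrix_vector_mult: "blk (M *v x) i = (\<Sum>j\<in>UNIV. mblk M i j *v blk x j)"
  by (simp add: vec_eq_iff sum_component matrix_vector_mult_def sum.cartesian_product
      flip: UNIV_Times_UNIV)

lemma blk_matrix_vector_mult_sparse:
  assumes "\<forall>j. j \<notin> N \<longrightarrow> mblk M i j = 0"
  shows "blk (M *v x) i = (\<Sum>j\<in>N. mblk M i j *v blk x j)"
  unfolding blk_matrix_vector_mult using assms by (intro sum.mono_neutral_right) auto

definition block_diagonal :: "real^('n::finite \<times> 'p::finite)^('n \<times> 'p) \<Rightarrow> bool" where
  "block_diagonal M \<longleftrightarrow> (\<forall>c d. fst c \<noteq> fst d \<longrightarrow> M $ c $ d = 0)"

lemma blk_block_diagonal_mult:
  assumes "block_diagonal M"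
  shows "blk (M *v x) i = mblk M i i *v blk x i"
  using assms unfolding block_diagonal_def
  by (intro blk_matrix_vector_mult_sparse[where N = "{i}", simplified]) (simp add: vec_eq_iff)

lemma matrix_inv_inverse:
  "invertible A \<Longrightarrow> A ** matrix_inv A = mat 1 \<and> matrix_inv A ** A = mat 1"
  unfolding matrix_inv_def invertible_def by (rule someI_ex)

lemma pos_def_invertible: "pos_def D \<Longrightarrow> invertible D"
  unfolding invertible_left_inverse matrix_left_invertible_ker pos_def_def
  by (metis inner_zero_right less_irrefl)

lemma invertible_diagonal_block:
  assumes bd: "block_diagonal D" and pd: "pos_def D"
  shows "invertible (mblk D i i)"
  unfolding invertible_left_inverse matrix_left_invertible_ker
proof (intro allI impI)
  fix w assume w: "mblk D i i *v w = 0"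
  define x :: "real^('a \<times> 'b)" where "x = (\<chi> c. if fst c = i then w $ snd c else 0)"
  have bx: "blk x j = (if j = i then w else 0)" for j
    by (simp add: vec_eq_iff x_def)
  have "D *v x = 0"
    by (rule blk_eqI) (simp add: blk_block_diagonal_mult[OF bd] bx w blk_zero)
  then have "x = 0" using pd unfolding pos_def_def by (metis inner_zero_right less_irrefl)
  then show "w = 0" using bx[of i] by (simp add: blk_zero)
qed

lemma blk_matrix_inv_block_diagonal:
  assumes bd: "block_diagonal D" and pd: "pos_def D"
  shows "blk (matrix_inv D *v u) i = matrix_inv (mblk D i i) *v blk u i"
proof -
  define x where "x = matrix_inv D *v u"
  have "D *v x = u"
    using matrix_inv_inverse[OF pos_def_invertible[OF pd]]
    by (simp add: x_def matrix_vector_mul_assoc)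
  then have "blk u i = mblk D i i *v blk x i"
    using blk_block_diagonal_mult[OF bd] by metis
  then show ?thesis
    using matrix_inv_inverse[OF invertible_diagonal_block[OF bd pd]]
    by (simp add: x_def matrix_vector_mul_assoc)
qed

lemma block_diagonal_hess_fsum:
  assumes "\<forall>i. twice_pdifferentiable (\<lambda>y. f i (blk y i) t)"
  shows "block_diagonal (hess (\<lambda>y. fsum f y t) z)"
proof -
  have "hess (\<lambda>y. f i (blk y i) t) z $ c $ d = 0" if "fst c \<noteq> fst d" for i c d
    using that by (intro hess_eq_0_if_independent[OF depends_only_on_blk]) auto
  then show ?thesis
    using assms unfolding block_diagonal_def fsum_def by (simp add: hess_sum sum_component)
qed

lemma hess_gsum_eq_0:
  assumes gd: "\<forall>i. twice_pdifferentiable (\<lambda>y. gd i (blk y i) t)"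
    and ge: "\<forall>(i, j)\<in>E. twice_pdifferentiable (\<lambda>y. ge i j (blk y i) (blk y j) t)"
    and off_diag: "fst c \<noteq> fst d" and non_edge: "(fst c, fst d) \<notin> E" "(fst d, fst c) \<notin> E"
  shows "hess (\<lambda>y. gsum gd ge E y t) z $ c $ d = 0"
proof -
  have fin: "finite E" by simp
  have gd_sum: "twice_pdifferentiable (\<lambda>y. \<Sum>i\<in>UNIV. gd i (blk y i) t)"
    using gd by (intro hess_sum(2)) auto
  have ge_sum: "twice_pdifferentiable (\<lambda>y. \<Sum>(i, j)\<in>E. ge i j (blk y i) (blk y j) t)"
    using ge by (intro hess_sum(2)[OF fin]) (auto split: prod.splits)
  have "hess (\<lambda>y. gd i (blk y i) t) z $ c $ d = 0" for i
    using off_diag by (intro hess_eq_0_if_independent[OF depends_only_on_blk]) auto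
  moreover have "hess (\<lambda>y. case e of (i, j) \<Rightarrow> ge i j (blk y i) (blk y j) t) z $ c $ d = 0"
    if "e \<in> E" for e
    using that off_diag non_edge
    by (cases e) (auto intro!: hess_eq_0_if_independent[OF depends_only_on_blk2])
  ultimately show ?thesis
    using gd ge unfolding gsum_def hess_add[OF gd_sum ge_sum]
    by (simp add: hess_sum sum_component split_beta')
qed

lemma mblk_bdiag_minus_hess_gsum_eq_0:
  assumes gd: "\<forall>i. twice_pdifferentiable (\<lambda>y. gd i (blk y i) t)"
    and ge: "\<forall>(i, j)\<in>E. twice_pdifferentiable (\<lambda>y. ge i j (blk y i) (blk y j) t)"
    and undirected: "\<forall>i j. (i, j) \<in> E \<longrightarrow> (j, i) \<in> E"
    and non_neighbour: "(i, j) \<notin> E"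
  shows "mblk (bdiag (hess (\<lambda>y. gsum gd ge E y t) z) - hess (\<lambda>y. gsum gd ge E y t) z) i j = 0"
proof -
  have "hess (\<lambda>y. gsum gd ge E y t) z $ (i, a) $ (j, b) = 0" if "j \<noteq> i" for a b
    using that non_neighbour undirected gd ge by (intro hess_gsum_eq_0) auto
  then show ?thesis
    by (simp add: vec_eq_iff bdiag_def)
qed

lemma sum_matrix_vector_mult: "(\<Sum>s\<in>A. F s) *v u = (\<Sum>s\<in>A. F s *v u)"
  by (induction A rule: infinite_finite_induct)
     (simp_all add: matrix_vector_mult_add_rdistrib matrix_vector_mult_0)

lemma jacobi_iteration_closed_form:
  assumes "q 0 = - (Dinv *v v)" "\<And>\<tau>. q (Suc \<tau>) = Dinv *v (B *v q \<tau> - v)"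
  shows "q \<tau> = - (\<Sum>s\<in>{0..\<tau>}. mpow (Dinv ** B) s *v (Dinv *v v))"
proof (induction \<tau>)
  case 0
  then show ?case using assms(1) by simp
next
  case (Suc \<tau>)
  have "q (Suc \<tau>) = (Dinv ** B) *v q \<tau> - Dinv *v v"
    by (simp add: assms(2) matrix_vector_mult_diff_distrib matrix_vector_mul_assoc)
  also have "\<dots> = - (\<Sum>s\<in>{0..\<tau>}. mpow (Dinv ** B) (Suc s) *v (Dinv *v v)) - Dinv *v v"
    by (simp add: Suc vec.neg vec.sum matrix_vector_mul_assoc matrix_mul_assoc)
  also have "\<dots> = - (\<Sum>s\<in>{0..Suc \<tau>}. mpow (Dinv ** B) s *v (Dinv *v v))"
    by (subst sum.atLeast0_atMost_Suc_shift)
       (simp add: o_def del: mpow.simps(2) sum.atLeast0_atMost_Suc)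
  finally show ?case .
qed

lemma mpow_symmetric_scaling:
  assumes "S ** S = Dinv"
  shows "S ** mpow (S ** B ** S) n ** S = mpow (Dinv ** B) n ** Dinv"
proof (induction n)
  case 0
  then show ?case using assms by simp
next
  case (Suc n)
  have "S ** mpow (S ** B ** S) (Suc n) ** S = (S ** S) ** B ** (S ** mpow (S ** B ** S) n ** S)"
    by (simp add: matrix_mul_assoc)
  then show ?case
    using Suc assms by (simp add: matrix_mul_assoc)
qed

lemma neumann_symmetric_scaling:
  assumes "S ** S = Dinv"
  shows "(S ** (\<Sum>\<tau>\<in>A. mpow (S ** B ** S) \<tau>) ** S) *v v
       = (\<Sum>\<tau>\<in>A. mpow (Dinv ** B) \<tau> *v (Dinv *v v))"
proof -
  have "(S ** (\<Sum>\<tau>\<in>A. mpow (S ** B ** S) \<tau>) ** S) *v v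
      = S *v ((\<Sum>\<tau>\<in>A. mpow (S ** B ** S) \<tau>) *v (S *v v))"
    by (simp add: matrix_vector_mul_assoc matrix_mul_assoc)
  also have "\<dots> = (\<Sum>\<tau>\<in>A. S *v (mpow (S ** B ** S) \<tau> *v (S *v v)))"
    by (simp add: sum_matrix_vector_mult vec.sum)
  also have "\<dots> = (\<Sum>\<tau>\<in>A. (S ** mpow (S ** B ** S) \<tau> ** S) *v v)"
    by (simp add: matrix_vector_mul_assoc matrix_mul_assoc)
  finally show ?thesis
    by (simp add: mpow_symmetric_scaling[OF assms] matrix_vector_mul_assoc)
qed

lemma dist_dir_closed_form:
  assumes bd: "block_diagonal D" and pd: "pos_def D"
    and sparse: "\<forall>i j. j \<notin> N i \<longrightarrow> mblk B i j = 0"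
  shows "dist_dir D B N v \<tau> i
       = blk (- (\<Sum>s\<in>{0..\<tau>}. mpow (matrix_inv D ** B) s *v (matrix_inv D *v v))) i"
proof -
  define q where "q \<tau> = (\<chi> c. dist_dir D B N v \<tau> (fst c) $ snd c)" for \<tau>
  have blk_q: "blk (q \<tau>) i = dist_dir D B N v \<tau> i" for \<tau> i
    by (simp add: vec_eq_iff q_def)
  have blk_B: "blk (B *v x) i = (\<Sum>j\<in>N i. mblk B i j *v blk x j)" for x i
    using sparse by (intro blk_matrix_vector_mult_sparse) auto
  have "q \<tau> = - (\<Sum>s\<in>{0..\<tau>}. mpow (matrix_inv D ** B) s *v (matrix_inv D *v v))"
  proof (rule jacobi_iteration_closed_form)
    show "q 0 = - (matrix_inv D *v v)"
      by (rule blk_eqI) (simp add: blk_q blk_uminus blk_matrix_inv_block_diagonal[OF bd pd])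
    show "q (Suc \<tau>) = matrix_inv D *v (B *v q \<tau> - v)" for \<tau>
      by (intro blk_eqI) (simp add: blk_q blk_diff blk_matrix_inv_block_diagonal[OF bd pd] blk_B)
  qed
  then show ?thesis by (simp flip: blk_q)
qed

theorem proposition1:
  fixes E :: "('n::finite \<times> 'n) set"
    and f :: "'n \<Rightarrow> real^'p::finite \<Rightarrow> real \<Rightarrow> real"
    and gd :: "'n \<Rightarrow> real^'p \<Rightarrow> real \<Rightarrow> real"
    and ge :: "'n \<Rightarrow> 'n \<Rightarrow> real^'p \<Rightarrow> real^'p \<Rightarrow> real \<Rightarrow> real"
    and yk :: "real^('n \<times> 'p)" and tk :: real
    and Dhalf :: "real^('n \<times> 'p)^('n \<times> 'p)"
    and K :: nat
  assumes undirected: "\<forall>i j. (i, j) \<in> E \<longrightarrow> (j, i) \<in> E"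
    and no_loops: "\<forall>i. (i, i) \<notin> E"
    and connected: "\<forall>i j. (i, j) \<in> E\<^sup>*"
    and C2_f: "\<forall>i t. C2 (\<lambda>y. f i (blk y i) t)"
    and C2_gd: "\<forall>i t. C2 (\<lambda>y. gd i (blk y i) t)"
    and C2_ge: "\<forall>i j t. (i, j) \<in> E \<longrightarrow> C2 (\<lambda>y. ge i j (blk y i) (blk y j) t)"
    and grad_t_exists: "\<forall>y t c. (\<lambda>s. pdiff (\<lambda>z. fsum f z s + gsum gd ge E z s) y c)
                                     differentiable (at t)"
    and D_pd: "pos_def (hess (\<lambda>y. fsum f y tk) yk + bdiag (hess (\<lambda>y. gsum gd ge E y tk) yk))"
    and Dhalf_def: "pos_def Dhalf \<and>
        Dhalf ** Dhalf = matrix_inv (hess (\<lambda>y. fsum f y tk) yk + bdiag (hess (\<lambda>y. gsum gd ge E y tk) yk))"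
  shows
    "let F = (\<lambda>y t. fsum f y t + gsum gd ge E y t);
         Hg = hess (\<lambda>y. gsum gd ge E y tk) yk;
         D = hess (\<lambda>y. fsum f y tk) yk + bdiag Hg;
         B = bdiag Hg - Hg;
         v = grad_t F yk tk;
         Hinv = Dhalf ** (\<Sum>\<tau>\<in>{0..K}. mpow (Dhalf ** B ** Dhalf) \<tau>) ** Dhalf;
         p = - (Hinv *v v)
     in \<forall>i. dist_dir D B (\<lambda>i. {j. (i, j) \<in> E}) v K i = blk p i"
proof -
  define Hg where "Hg = hess (\<lambda>y. gsum gd ge E y tk) yk"
  define D where "D = hess (\<lambda>y. fsum f y tk) yk + bdiag Hg"
  define B where "B = bdiag Hg - Hg"
  define v where "v = grad_t (\<lambda>y t. fsum f y t + gsum gd ge E y t) yk tk"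
  have "block_diagonal (hess (\<lambda>y. fsum f y tk) yk)"
    using C2_f C2_imp_twice_pdifferentiable by (intro block_diagonal_hess_fsum) blast
  then have D_block_diagonal: "block_diagonal D"
    by (simp add: D_def block_diagonal_def bdiag_def)
  have D_pos_def: "pos_def D"
    using D_pd by (simp add: D_def Hg_def)
  have "\<forall>i. twice_pdifferentiable (\<lambda>y. gd i (blk y i) tk)"
    and "\<forall>(i, j)\<in>E. twice_pdifferentiable (\<lambda>y. ge i j (blk y i) (blk y j) tk)"
    using C2_gd C2_ge C2_imp_twice_pdifferentiable by blast+
  then have B_sparse: "\<forall>i j. j \<notin> {j. (i, j) \<in> E} \<longrightarrow> mblk B i j = 0"
    unfolding B_def Hg_def using undirected by (auto intro: mblk_bdiag_minus_hess_gsum_eq_0)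
  have "Dhalf ** Dhalf = matrix_inv D"
    using Dhalf_def by (simp add: D_def Hg_def)
  then have "dist_dir D B (\<lambda>i. {j. (i, j) \<in> E}) v K i
      = blk (- ((Dhalf ** (\<Sum>\<tau>\<in>{0..K}. mpow (Dhalf ** B ** Dhalf) \<tau>) ** Dhalf) *v v)) i" for i
    by (simp only: dist_dir_closed_form[OF D_block_diagonal D_pos_def B_sparse]
        neumann_symmetric_scaling)
  then show ?thesis
    unfolding Let_def Hg_def[symmetric] D_def[symmetric] B_def[symmetric] v_def[symmetric]
    by blast
qed

end
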